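(* Let $q\in\mathbb{N}$, $f\in H_q$, and let $\psi\in\mathcal{P}_q$ have modulus $q_0$. The following are equivalent: (1) $f\in E_{q,\psi}$; (2) $f(n)=f(\widehat n)\psi(\frac n{\widehat n})$ for every $n\ge1$, where $\widehat n=\gcd(n,\frac q{q_0})$; (3) $(f\ast\mu\psi)(n)=0$ whenever $n\nmid\frac q{q_0}$; (4) $D_f(s)=P(s)L(s,\psi)$ for some Dirichlet polynomial $P$.
   Context: $H_q$ is the space of $q$-periodic arithmetical functions $f:\mathbb{N}\to\mathbb{C}$. A Dirichlet character mod $m$ is a completely multiplicative $m$-periodic function with $\chi(n)\ne0$ iff $\gcd(n,m)=1$; $\psi$ mod $d$ induces $\chi$ mod $m$ if $d\mid m$ and $\chi=\psi\chi_m$ with $\chi_m$ principal mod $m$; primitive means not induced by a character of modulus a proper divisor. $\mathcal{P}_q$ is the set of primitive Dirichlet characters whose modulus divides $q$. For $d\mid q$ and a character $\chi$ mod $\frac qd$, $\xi_\chi(n)=\chi(\frac nd)$ if $d\mid n$ and $0$ otherwise. For $\psi\in\mathcal{P}_q$ of modulus $q_0$, $E_{q,\psi}$ is the span of $\{\xi_{\psi_{q/d}}:d\mid\frac q{q_0}\}$, where $\psi_{q/d}$ is the character mod $\frac qd$ induced by $\psi$. $\mu$ is the Möbius function, $(f\ast h)(n)=\sum_{d\mid n}f(\frac nd)h(d)$, $\mu\psi$ is the pointwise product, $D_f(s)=\sum_{n\ge1}f(n)n^{-s}$, and $L(s,\psi)=D_\psi(s)$ (on $\mathrm{Re}\,s>1$).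 *)

theory Defs
  imports "HOL-Analysis.Analysis" "HOL-Computational_Algebra.Squarefree"
begin

(* Arithmetical functions are functions nat => complex; only arguments n >= 1 matter
   (the value at 0 is irrelevant and unconstrained). *)

definition periodic_arith :: "nat \<Rightarrow> (nat \<Rightarrow> complex) \<Rightarrow> bool" where
  "periodic_arith q f \<longleftrightarrow> (\<forall>n\<ge>1. f (n + q) = f n)"

definition dirichlet_char :: "nat \<Rightarrow> (nat \<Rightarrow> complex) \<Rightarrow> bool" where
  "dirichlet_char m chi \<longleftrightarrow> m > 0 \<and> (\<forall>a b. chi (a * b) = chi a * chi b)
     \<and> (\<forall>n. chi (n + m) = chi n) \<and> (\<forall>n. chi n \<noteq> 0 \<longleftrightarrow> coprime n m)"

definition principal_char :: "nat \<Rightarrow> nat \<Rightarrow> complex" where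
  "principal_char m n = (if coprime n m then 1 else 0)"

definition induces :: "nat \<Rightarrow> (nat \<Rightarrow> complex) \<Rightarrow> nat \<Rightarrow> (nat \<Rightarrow> complex) \<Rightarrow> bool" where
  "induces d \<psi> m chi \<longleftrightarrow> d dvd m \<and> (\<forall>n. chi n = \<psi> n * principal_char m n)"

definition primitive_char :: "nat \<Rightarrow> (nat \<Rightarrow> complex) \<Rightarrow> bool" where
  "primitive_char d chi \<longleftrightarrow> dirichlet_char d chi \<and>
     (\<forall>d' \<psi>. d' dvd d \<and> d' \<noteq> d \<and> dirichlet_char d' \<psi> \<longrightarrow> \<not> induces d' \<psi> d chi)"

definition induced_char :: "(nat \<Rightarrow> complex) \<Rightarrow> nat \<Rightarrow> nat \<Rightarrow> complex" where
  "induced_char \<psi> m n = \<psi> n * principal_char m n"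

definition xi :: "nat \<Rightarrow> (nat \<Rightarrow> complex) \<Rightarrow> nat \<Rightarrow> complex" where
  "xi d chi n = (if d dvd n then chi (n div d) else 0)"

(* f \<in> E_{q,\<psi>} (\<psi> of modulus q0): f is a linear combination of the \<xi>_{\<psi>_{q/d}}, d | q/q0,
   as functions on the positive integers *)
definition in_E :: "nat \<Rightarrow> nat \<Rightarrow> (nat \<Rightarrow> complex) \<Rightarrow> (nat \<Rightarrow> complex) \<Rightarrow> bool" where
  "in_E q q0 \<psi> f \<longleftrightarrow> (\<exists>c :: nat \<Rightarrow> complex. \<forall>n\<ge>1.
      f n = (\<Sum>d | d dvd (q div q0). c d * xi d (induced_char \<psi> (q div d)) n))"

definition mobius_mu :: "nat \<Rightarrow> complex" where
  "mobius_mu n = (if n > 0 \<and> squarefree n then (-1) ^ card (prime_factors n) else 0)"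

definition dconv :: "(nat \<Rightarrow> complex) \<Rightarrow> (nat \<Rightarrow> complex) \<Rightarrow> nat \<Rightarrow> complex" where
  "dconv f h n = (\<Sum>d | d dvd n. f (n div d) * h d)"

definition dseries :: "(nat \<Rightarrow> complex) \<Rightarrow> complex \<Rightarrow> complex" where
  "dseries f s = (\<Sum>n. f (Suc n) / of_nat (Suc n) powr s)"

definition dpoly :: "(nat \<Rightarrow> complex) \<Rightarrow> nat \<Rightarrow> complex \<Rightarrow> complex" where
  "dpoly a N s = (\<Sum>n=1..N. a n / of_nat n powr s)"

end

theory Submission
  imports Defs "HOL-Number_Theory.Cong"
begin

(* Moebius inversion against \<psi> writes f = \<psi> * H with H = f * \<mu>\<psi>. The basis function of
   E_{q,\<psi>} indexed by d is supported on the n with gcd(n, q/q0) = d, where it equals \<psi>(n/d);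
   so (1) says f(n) = c(g) \<psi>(n/g) for g = gcd(n, q/q0), which is (2), and (2) holds exactly
   when H is supported on the divisors of q/q0, which is (3); then D_f = D_H L(s,\<psi>) is (4).

   Conversely, a bounded sequence is determined by its Dirichlet series, so (4) gives
   f = \<psi> * a with a supported on [1, N], hence f(kt) = \<psi>(t) f(k) whenever t is coprime to N!.
   With q-periodicity this yields f(gu) = \<psi>(u) f(g) when u is coprime to q0. If f(k) \<noteq> 0 it
   also makes \<psi> trivial on the residues t = 1 mod q/gcd(k, q), and primitivity then forces
   q0 | q/gcd(k, q); for n = gu with gcd(u, q0) > 1 this is impossible, so f(n) = 0. *)

section \<open>Periodic functions and Dirichlet characters\<close>

lemma periodic_eq_if_mod_eq:
  fixes g :: "nat \<Rightarrow> 'a"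
  assumes per: "\<And>n. n \<ge> n0 \<Longrightarrow> g (n + p) = g n"
    and "a \<ge> n0" "b \<ge> n0" "a mod p = b mod p"
  shows "g a = g b"
proof -
  have shift: "g (r + p * k) = g r" if "r \<ge> n0" for r k
  proof (induction k)
    case (Suc k)
    have "g (r + p * Suc k) = g ((r + p * k) + p)" by (simp add: algebra_simps)
    also have "\<dots> = g (r + p * k)" using that by (intro per) simp
    finally show ?case using Suc.IH by simp
  qed simp
  show ?thesis
  proof (cases "a \<le> b")
    case True
    then obtain k where "b = a + p * k" using \<open>a mod p = b mod p\<close> by (elim mod_eq_nat2E)
    then show ?thesis using shift \<open>a \<ge> n0\<close> by simp
  next
    case False
    then obtain k where "a = b + p * k" using \<open>a mod p = b mod p\<close> by (elim mod_eq_nat1E) simp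
    then show ?thesis using shift \<open>b \<ge> n0\<close> by simp
  qed
qed

lemma periodic_bounded:
  fixes g :: "nat \<Rightarrow> 'a::real_normed_vector"
  assumes per: "\<And>n. n \<ge> n0 \<Longrightarrow> g (n + p) = g n" and "p > 0"
  shows "\<exists>B. \<forall>n\<ge>n0. norm (g n) \<le> B"
proof -
  let ?B = "Max ((\<lambda>k. norm (g k)) ` {n0..<n0 + p})"
  have "norm (g n) \<le> ?B" if "n \<ge> n0" for n
  proof -
    define r where "r = n0 + (n - n0) mod p"
    have "r \<in> {n0..<n0 + p}" using \<open>p > 0\<close> by (simp add: r_def)
    moreover have "r mod p = n mod p" using that by (simp add: r_def mod_add_right_eq)
    then have "g n = g r"
      by (intro periodic_eq_if_mod_eq[of n0 g p, OF per]) (use that in \<open>auto simp: r_def\<close>)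
    ultimately show ?thesis by (simp add: Max_ge)
  qed
  then show ?thesis by blast
qed

lemma dirichlet_charD:
  assumes "dirichlet_char m chi"
  shows "m > 0" "chi (a * b) = chi a * chi b" "chi n \<noteq> 0 \<longleftrightarrow> coprime n m"
  using assms by (auto simp: dirichlet_char_def)

lemma dirichlet_char_one:
  assumes "dirichlet_char m chi"
  shows "chi 1 = 1"
proof -
  have "chi 1 \<noteq> 0" "chi 1 * chi 1 = chi 1"
    using dirichlet_charD(2)[OF assms, of 1 1] dirichlet_charD(3)[OF assms, of 1] by auto
  then show ?thesis by simp
qed

lemma dirichlet_char_cong:
  assumes "dirichlet_char m chi" "a mod m = b mod m"
  shows "chi a = chi b"
  by (rule periodic_eq_if_mod_eq[of 0 chi m]) (use assms in \<open>auto simp: dirichlet_char_def\<close>)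

lemma dirichlet_char_bounded:
  assumes "dirichlet_char m chi"
  obtains B where "\<And>n. norm (chi n) \<le> B"
proof -
  have "\<exists>B. \<forall>n\<ge>0. norm (chi n) \<le> B"
    by (rule periodic_bounded[of 0 chi m]) (use assms in \<open>simp_all add: dirichlet_char_def\<close>)
  then show thesis using that by auto
qed

lemma periodic_arith_cong:
  assumes "periodic_arith q f" "a \<ge> 1" "b \<ge> 1" "a mod q = b mod q"
  shows "f a = f b"
  by (rule periodic_eq_if_mod_eq[of 1 f q]) (use assms in \<open>auto simp: periodic_arith_def\<close>)

lemma periodic_arith_bounded:
  assumes "periodic_arith q f" "q > 0"
  obtains B where "\<And>n. n \<ge> 1 \<Longrightarrow> norm (f n) \<le> B"
proof -
  have "\<exists>B. \<forall>n\<ge>1. norm (f n) \<le> B"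
    by (rule periodic_bounded[of 1 f q]) (use assms in \<open>simp_all add: periodic_arith_def\<close>)
  then show thesis using that by auto
qed

section \<open>Dirichlet convolution and Moebius inversion\<close>

lemma dconv_cong:
  assumes "\<And>d. d dvd n \<Longrightarrow> a (n div d) = a' (n div d)" "\<And>d. d dvd n \<Longrightarrow> b d = b' d"
  shows "dconv a b n = dconv a' b' n"
  unfolding dconv_def using assms by (intro sum.cong) auto

lemma dconv_commute:
  assumes "n > 0"
  shows "dconv a b n = dconv b a n"
  unfolding dconv_def
  by (rule sum.reindex_bij_witness[where i="\<lambda>d. n div d" and j="\<lambda>d. n div d"])
     (use assms in \<open>auto simp: div_div_eq_right\<close>)

lemma dconv_assoc:
  assumes "n > 0"
  shows "dconv (dconv a b) c n = dconv a (dconv b c) n"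
proof -
  let ?lhs_pairs = "SIGMA d:{d. d dvd n}. {e. e dvd n div d}"
  let ?rhs_pairs = "SIGMA d:{d. d dvd n}. {e. e dvd d}"
  have "dconv (dconv a b) c n = (\<Sum>d | d dvd n. \<Sum>e | e dvd n div d. a (n div d div e) * b e * c d)"
    by (simp add: dconv_def sum_distrib_right)
  also have "\<dots> = (\<Sum>(d, e)\<in>?lhs_pairs. a (n div d div e) * b e * c d)"
    using assms by (intro sum.Sigma) auto
  also have "\<dots> = (\<Sum>(d, e)\<in>?rhs_pairs. a (n div d) * b (d div e) * c e)"
  proof (rule sum.reindex_bij_witness[where j="\<lambda>(d, e). (d * e, d)" and i="\<lambda>(d, e). (e, d div e)"])
    fix x assume "x \<in> ?lhs_pairs"
    then obtain d e where x: "x = (d, e)" "d dvd n" "e dvd n div d" by auto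
    then have "d > 0" using assms by (auto intro: dvd_pos_nat)
    moreover have "d * e dvd n" using x by (metis dvd_div_iff_mult dvd_mult_div_cancel mult_dvd_mono dvd_refl)
    ultimately show "(\<lambda>(d, e). (e, d div e)) ((\<lambda>(d, e). (d * e, d)) x) = x"
      "(\<lambda>(d, e). (d * e, d)) x \<in> ?rhs_pairs"
      "(case (\<lambda>(d, e). (d * e, d)) x of (d, e) \<Rightarrow> a (n div d) * b (d div e) * c e) =
       (case x of (d, e) \<Rightarrow> a (n div d div e) * b e * c d)"
      using x by (auto simp: div_mult2_eq)
  next
    fix y assume "y \<in> ?rhs_pairs"
    then obtain d e where y: "y = (d, e)" "d dvd n" "e dvd d" by auto
    then show "(\<lambda>(d, e). (d * e, d)) ((\<lambda>(d, e). (e, d div e)) y) = y"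
      "(\<lambda>(d, e). (e, d div e)) y \<in> ?lhs_pairs"
      using assms by (auto intro: dvd_trans simp: div_div_div_same dvd_div_iff_mult)
  qed
  also have "\<dots> = (\<Sum>d | d dvd n. \<Sum>e | e dvd d. a (n div d) * b (d div e) * c e)"
    using assms by (intro sum.Sigma[symmetric]) auto
  also have "\<dots> = dconv a (dconv b c) n"
    by (simp add: dconv_def sum_distrib_left mult.assoc)
  finally show ?thesis .
qed

lemma dconv_delta_right:
  assumes "n > 0"
  shows "dconv a (\<lambda>d. if d = 1 then 1 else 0) n = a n"
proof -
  have "dconv a (\<lambda>d. if d = 1 then 1 else 0) n = (\<Sum>d | d dvd n. if d = 1 then a n else 0)"
    unfolding dconv_def by (intro sum.cong) auto
  also have "\<dots> = a n" using assms by (simp add: sum.delta)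
  finally show ?thesis .
qed

lemma mobius_mu_prime_mult:
  assumes p: "prime (p::nat)" and "d > 0"
  shows "mobius_mu (p * d) = (if p dvd d then 0 else - mobius_mu d)"
proof (cases "p dvd d")
  case True
  then have "p ^ 2 dvd p * d" by (simp add: power2_eq_square)
  then have "\<not> squarefree (p * d)" using p by (metis not_squarefreeI not_prime_unit)
  then show ?thesis using True by (simp add: mobius_mu_def)
next
  case False
  then have "coprime p d" using p by (simp add: prime_imp_coprime)
  then have "squarefree (p * d) \<longleftrightarrow> squarefree d"
    using squarefree_multD(2)[of p d] squarefree_mult_coprime[of p d] squarefree_prime[OF p] by blast
  moreover have "prime_factors (p * d) = insert p (prime_factors d)"
    using p \<open>d > 0\<close> by (simp add: prime_factors_product prime_prime_factors prime_gt_0_nat)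
  moreover have "p \<notin> prime_factors d" using False by (auto dest: in_prime_factors_imp_dvd)
  ultimately show ?thesis using False \<open>d > 0\<close> p by (simp add: mobius_mu_def prime_gt_0_nat)
qed

lemma sum_mobius_mu_divisors:
  assumes "n > 0"
  shows "(\<Sum>d | d dvd n. mobius_mu d) = (if n = 1 then 1 else 0)"
proof (cases "n = 1")
  case True
  then show ?thesis by (simp add: mobius_mu_def)
next
  case False
  then obtain p where p: "prime p" "p dvd n" using assms by (metis prime_factor_nat)
  define n' where "n' = n div p"
  have n: "n = p * n'" "n' > 0" using p assms by (auto simp: n'_def)
  have fin: "finite {d. d dvd n}" using assms by simp
  have coprime_to_p: "{d. d dvd n \<and> \<not> p dvd d} = {d. d dvd n' \<and> \<not> p dvd d}"
  proof -
    have "d dvd n \<longleftrightarrow> d dvd n'" if "\<not> p dvd d" for d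
    proof -
      have "coprime d p" using p(1) that by (metis coprime_commute prime_imp_coprime)
      then show ?thesis by (simp add: n(1) coprime_dvd_mult_right_iff)
    qed
    then show ?thesis by blast
  qed
  have "(\<Sum>d | d dvd n \<and> p dvd d. mobius_mu d) = (\<Sum>d | d dvd n'. mobius_mu (p * d))"
    by (rule sum.reindex_bij_witness[where j="\<lambda>d. d div p" and i="\<lambda>d. p * d"])
       (use p n in \<open>auto simp: div_div_div_same\<close>)
  also have "\<dots> = (\<Sum>d | d dvd n' \<and> \<not> p dvd d. - mobius_mu d)"
  proof (rule sum.mono_neutral_cong_right)
    show "finite {d. d dvd n'}" using n(2) by simp
    show "\<forall>d\<in>{d. d dvd n'} - {d. d dvd n' \<and> \<not> p dvd d}. mobius_mu (p * d) = 0"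
      using n(2) by (auto simp: mobius_mu_prime_mult[OF p(1)] intro: dvd_pos_nat)
    show "mobius_mu (p * d) = - mobius_mu d" if "d \<in> {d. d dvd n' \<and> \<not> p dvd d}" for d
      using that n(2) by (auto simp: mobius_mu_prime_mult[OF p(1)] intro: dvd_pos_nat)
  qed auto
  finally have "(\<Sum>d | d dvd n \<and> p dvd d. mobius_mu d) = - (\<Sum>d | d dvd n \<and> \<not> p dvd d. mobius_mu d)"
    by (simp add: coprime_to_p sum_negf)
  moreover have "(\<Sum>d | d dvd n. mobius_mu d) =
      (\<Sum>d | d dvd n \<and> p dvd d. mobius_mu d) + (\<Sum>d | d dvd n \<and> \<not> p dvd d. mobius_mu d)"
    using fin by (subst sum.union_disjoint[symmetric]) (auto intro!: sum.cong)
  ultimately show ?thesis using False by simp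
qed

lemma dconv_char_mobius:
  assumes "dirichlet_char m \<psi>" "n > 0"
  shows "dconv \<psi> (\<lambda>k. mobius_mu k * \<psi> k) n = (if n = 1 then 1 else 0)"
proof -
  have "dconv \<psi> (\<lambda>k. mobius_mu k * \<psi> k) n = (\<Sum>d | d dvd n. \<psi> n * mobius_mu d)"
  proof (unfold dconv_def, intro sum.cong refl)
    fix d assume "d \<in> {d. d dvd n}"
    then have "\<psi> n = \<psi> (n div d) * \<psi> d" using dirichlet_charD(2)[OF assms(1), of "n div d" d] by simp
    then show "\<psi> (n div d) * (mobius_mu d * \<psi> d) = \<psi> n * mobius_mu d" by (simp add: mult_ac)
  qed
  also have "\<dots> = (if n = 1 then 1 else 0)"
    using assms dirichlet_char_one[OF assms(1)]
    by (simp add: sum_distrib_left[symmetric] sum_mobius_mu_divisors)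
  finally show ?thesis .
qed

lemma dconv_char_dconv_mobius:
  assumes "dirichlet_char m \<psi>" "n > 0"
  shows "dconv \<psi> (dconv f (\<lambda>k. mobius_mu k * \<psi> k)) n = f n"
proof -
  have "dconv \<psi> (dconv f (\<lambda>k. mobius_mu k * \<psi> k)) n = dconv (dconv f (\<lambda>k. mobius_mu k * \<psi> k)) \<psi> n"
    using assms(2) by (rule dconv_commute)
  also have "\<dots> = dconv f (dconv (\<lambda>k. mobius_mu k * \<psi> k) \<psi>) n"
    using assms(2) by (rule dconv_assoc)
  also have "\<dots> = dconv f (\<lambda>d. if d = 1 then 1 else 0) n"
    using assms by (intro dconv_cong refl)
      (auto simp: dconv_commute[of _ _ \<psi>] dconv_char_mobius intro: dvd_pos_nat)
  also have "\<dots> = f n" using assms(2) by (rule dconv_delta_right)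
  finally show ?thesis .
qed

lemma dconv_mobius_dconv_char:
  assumes "dirichlet_char m \<psi>" "\<And>n. n > 0 \<Longrightarrow> f n = dconv \<psi> a n" "n > 0"
  shows "dconv f (\<lambda>k. mobius_mu k * \<psi> k) n = a n"
proof -
  have "dconv f (\<lambda>k. mobius_mu k * \<psi> k) n = dconv (dconv a \<psi>) (\<lambda>k. mobius_mu k * \<psi> k) n"
    using assms by (intro dconv_cong refl) (auto simp: dconv_commute[of _ \<psi>] intro: dvd_pos_nat)
  also have "\<dots> = dconv a (dconv \<psi> (\<lambda>k. mobius_mu k * \<psi> k)) n"
    using assms(3) by (rule dconv_assoc)
  also have "\<dots> = dconv a (\<lambda>d. if d = 1 then 1 else 0) n"
    using assms(1,3) by (intro dconv_cong refl) (auto simp: dconv_char_mobius intro: dvd_pos_nat)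
  also have "\<dots> = a n" using assms(3) by (rule dconv_delta_right)
  finally show ?thesis .
qed

section \<open>The space \<open>E\<^sub>q\<^sub>,\<^sub>\<psi>\<close>\<close>

text \<open>If \<open>d\<close> divides \<open>n\<close> but \<open>d \<noteq> gcd n m\<close>, then \<open>gcd n m div d \<noteq> 1\<close> divides both \<open>n div d\<close> and
  \<open>q div d\<close>, so the induced character vanishes at \<open>n div d\<close>.\<close>

lemma xi_induced_char:
  assumes dc: "dirichlet_char q0 \<psi>" and q: "q = q0 * m" and "m > 0" "d dvd m"
  shows "xi d (induced_char \<psi> (q div d)) n = (if d = gcd n m then \<psi> (n div d) else 0)"
proof (cases "d dvd n")
  case False
  then show ?thesis by (auto simp: xi_def)
next
  case True
  define g where "g = gcd n m"
  have qd: "q div d = q0 * (m div d)" using q \<open>d dvd m\<close> by (simp add: div_mult_swap)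
  have "d dvd g" using True \<open>d dvd m\<close> by (simp add: g_def)
  show ?thesis
  proof (cases "d = g")
    case True
    have "coprime (n div d) (m div d)" using \<open>m > 0\<close> by (simp add: True g_def div_gcd_coprime)
    then have "\<psi> (n div d) * principal_char (q div d) (n div d) = \<psi> (n div d)"
      using dirichlet_charD(3)[OF dc, of "n div d"] by (auto simp: qd principal_char_def)
    then show ?thesis using \<open>d dvd n\<close> True by (simp add: xi_def induced_char_def g_def)
  next
    case False
    have "g div d dvd n div d" "g div d dvd m div d"
      using \<open>d dvd g\<close> \<open>d dvd n\<close> \<open>d dvd m\<close> by (simp_all add: g_def)
    then have "g div d dvd n div d" "g div d dvd q div d" by (simp_all add: qd)
    moreover have "g div d \<noteq> 1" using False \<open>d dvd g\<close> by auto
    ultimately have "\<not> coprime (n div d) (q div d)"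
      using coprime_common_divisor_nat by blast
    then show ?thesis using False \<open>d dvd n\<close> by (simp add: xi_def induced_char_def principal_char_def g_def)
  qed
qed

lemma in_E_iff_gcd_form:
  assumes dc: "dirichlet_char q0 \<psi>" and "q0 dvd q" "q > 0"
  shows "in_E q q0 \<psi> f \<longleftrightarrow> (\<forall>n\<ge>1. f n = f (gcd n (q div q0)) * \<psi> (n div gcd n (q div q0)))"
proof -
  define m where "m = q div q0"
  have q: "q = q0 * m" and "m > 0" using assms by (auto simp: m_def)
  have basis: "(\<Sum>d | d dvd m. c d * xi d (induced_char \<psi> (q div d)) n) = c (gcd n m) * \<psi> (n div gcd n m)"
    for c n
  proof -
    have "(\<Sum>d | d dvd m. c d * xi d (induced_char \<psi> (q div d)) n) =
        (\<Sum>d | d dvd m. if d = gcd n m then c d * \<psi> (n div d) else 0)"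
      using xi_induced_char[OF dc q \<open>m > 0\<close>] by (intro sum.cong) auto
    also have "\<dots> = c (gcd n m) * \<psi> (n div gcd n m)" using \<open>m > 0\<close> by (simp add: sum.delta)
    finally show ?thesis .
  qed
  have "in_E q q0 \<psi> f \<longleftrightarrow> (\<exists>c. \<forall>n\<ge>1. f n = c (gcd n m) * \<psi> (n div gcd n m))"
    unfolding in_E_def m_def[symmetric] basis ..
  also have "\<dots> \<longleftrightarrow> (\<forall>n\<ge>1. f n = f (gcd n m) * \<psi> (n div gcd n m))"
  proof
    assume "\<exists>c. \<forall>n\<ge>1. f n = c (gcd n m) * \<psi> (n div gcd n m)"
    then obtain c where c: "\<And>n. n \<ge> 1 \<Longrightarrow> f n = c (gcd n m) * \<psi> (n div gcd n m)" by blast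
    have "f (gcd n m) = c (gcd n m)" for n
      using c[of "gcd n m"] \<open>m > 0\<close> dirichlet_char_one[OF dc] by (simp add: Suc_le_eq)
    then show "\<forall>n\<ge>1. f n = f (gcd n m) * \<psi> (n div gcd n m)" using c by simp
  qed blast
  finally show ?thesis by (simp add: m_def)
qed

lemma dconv_char_eq_at_gcd:
  assumes dc: "dirichlet_char q0 \<psi>" and H: "\<And>d. \<not> d dvd m \<Longrightarrow> H d = 0" and "n > 0" "m > 0"
  shows "dconv \<psi> H n = \<psi> (n div gcd n m) * dconv \<psi> H (gcd n m)"
proof -
  define g where "g = gcd n m"
  have "g > 0" "g dvd n" using assms by (simp_all add: g_def)
  have "dconv \<psi> H n = (\<Sum>d | d dvd g. \<psi> (n div d) * H d)"
    unfolding dconv_def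
    by (rule sum.mono_neutral_right) (use assms \<open>g dvd n\<close> in \<open>auto simp: g_def intro: dvd_trans\<close>)
  also have "\<dots> = (\<Sum>d | d dvd g. \<psi> (n div g) * (\<psi> (g div d) * H d))"
  proof (intro sum.cong refl)
    fix d assume "d \<in> {d. d dvd g}"
    then have "n div d = (n div g) * (g div d)" using \<open>g dvd n\<close> by (auto simp: div_mult_swap)
    then show "\<psi> (n div d) * H d = \<psi> (n div g) * (\<psi> (g div d) * H d)"
      using dirichlet_charD(2)[OF dc] by simp
  qed
  also have "\<dots> = \<psi> (n div g) * dconv \<psi> H g"
    by (simp add: dconv_def sum_distrib_left)
  finally show ?thesis by (simp add: g_def)
qed

lemma gcd_form_iff_dconv_mobius_vanishes:
  assumes dc: "dirichlet_char q0 \<psi>" and "m > 0"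
  shows "(\<forall>n\<ge>1. f n = f (gcd n m) * \<psi> (n div gcd n m)) \<longleftrightarrow>
         (\<forall>n\<ge>1. \<not> n dvd m \<longrightarrow> dconv f (\<lambda>k. mobius_mu k * \<psi> k) n = 0)"
proof -
  define H where "H = dconv f (\<lambda>k. mobius_mu k * \<psi> k)"
  have f_eq: "f n = dconv \<psi> H n" if "n > 0" for n
    unfolding H_def using dconv_char_dconv_mobius[OF dc that] by simp
  have "\<forall>n\<ge>1. \<not> n dvd m \<longrightarrow> H n = 0" if gcd_form: "\<forall>n\<ge>1. f n = f (gcd n m) * \<psi> (n div gcd n m)"
  proof -
    define a where "a d = (if d dvd m then H d else 0)" for d
    have a0: "a d = 0" if "\<not> d dvd m" for d using that by (simp add: a_def)
    have "f n = dconv \<psi> a n" if "n > 0" for n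
    proof -
      have "dconv \<psi> a n = \<psi> (n div gcd n m) * dconv \<psi> a (gcd n m)"
        by (rule dconv_char_eq_at_gcd[OF dc a0 that \<open>m > 0\<close>])
      also have "dconv \<psi> a (gcd n m) = dconv \<psi> H (gcd n m)"
        unfolding a_def by (intro dconv_cong refl) (auto intro: dvd_trans)
      also have "\<dots> = f (gcd n m)" using f_eq \<open>m > 0\<close> by simp
      finally show ?thesis using gcd_form that by (simp add: mult.commute)
    qed
    then have "H n = a n" if "n > 0" for n
      unfolding H_def using dconv_mobius_dconv_char[OF dc _ that] by blast
    then show ?thesis using a0 by simp
  qed
  moreover have "\<forall>n\<ge>1. f n = f (gcd n m) * \<psi> (n div gcd n m)" if "\<forall>n\<ge>1. \<not> n dvd m \<longrightarrow> H n = 0"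
  proof (intro allI impI)
    have H0: "H d = 0" if "\<not> d dvd m" for d
      \<comment> \<open>at \<open>d = 0\<close> the divisor sum ranges over an infinite set and is therefore \<open>0\<close>\<close>
      using that \<open>\<forall>n\<ge>1. \<not> n dvd m \<longrightarrow> H n = 0\<close> by (cases "d = 0") (auto simp: H_def dconv_def)
    fix n :: nat assume "n \<ge> 1"
    then have "f n = dconv \<psi> H n" using f_eq by simp
    also have "\<dots> = \<psi> (n div gcd n m) * dconv \<psi> H (gcd n m)"
      by (rule dconv_char_eq_at_gcd[OF dc H0]) (use \<open>n \<ge> 1\<close> \<open>m > 0\<close> in auto)
    also have "dconv \<psi> H (gcd n m) = f (gcd n m)" using f_eq \<open>m > 0\<close> by simp
    finally show "f n = f (gcd n m) * \<psi> (n div gcd n m)" by (simp add: mult.commute)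
  qed
  ultimately show ?thesis unfolding H_def by blast
qed

section \<open>Dirichlet series\<close>

lemma summable_norm_dseries:
  assumes "\<And>n. n \<ge> 1 \<Longrightarrow> norm (b n) \<le> B" "Re s > 1"
  shows "summable (\<lambda>n. norm (b (Suc n) / of_nat (Suc n) powr s))"
proof (rule summable_comparison_test')
  have "summable (\<lambda>n. real n powr (- Re s))" using assms(2) by (subst summable_real_powr_iff) simp
  then have "summable (\<lambda>n. real (Suc n) powr (- Re s))" by (subst summable_Suc_iff)
  then show "summable (\<lambda>n. B * real (Suc n) powr (- Re s))" by (rule summable_mult)
next
  fix n :: nat
  have "norm (norm (b (Suc n) / of_nat (Suc n) powr s)) = norm (b (Suc n)) / real (Suc n) powr Re s"
    by (simp add: norm_divide norm_powr_real_powr)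
  also have "\<dots> \<le> B / real (Suc n) powr Re s"
    using assms(1)[of "Suc n"] by (intro divide_right_mono) auto
  also have "\<dots> = B * real (Suc n) powr (- Re s)" by (simp add: powr_minus divide_inverse)
  finally show "norm (norm (b (Suc n) / of_nat (Suc n) powr s)) \<le> B * real (Suc n) powr (- Re s)" .
qed

lemma dseries_sums:
  assumes "\<And>n. n \<ge> 1 \<Longrightarrow> norm (b n) \<le> B" "Re s > 1"
  shows "(\<lambda>n. b (Suc n) / of_nat (Suc n) powr s) sums dseries b s"
  unfolding dseries_def using summable_norm_cancel[OF summable_norm_dseries[OF assms]]
  by (rule summable_sums)

lemma dseries_diff:
  assumes "\<And>n. n \<ge> 1 \<Longrightarrow> norm (f n) \<le> Bf" "\<And>n. n \<ge> 1 \<Longrightarrow> norm (g n) \<le> Bg" "Re s > 1"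
  shows "dseries (\<lambda>n. f n - g n) s = dseries f s - dseries g s"
proof -
  have "(\<lambda>n. (f (Suc n) - g (Suc n)) / of_nat (Suc n) powr s) sums (dseries f s - dseries g s)"
    using sums_diff[OF dseries_sums[OF assms(1,3)] dseries_sums[OF assms(2,3)]]
    by (simp add: diff_divide_distrib)
  then show ?thesis unfolding dseries_def[of "\<lambda>n. f n - g n"] by (rule sums_unique[symmetric])
qed

lemma sums_dilate_dseries:
  fixes c :: "nat \<Rightarrow> complex"
  assumes "(\<lambda>n. c (Suc n) / of_nat (Suc n) powr s) sums L" "d > 0"
  shows "(\<lambda>k. if d dvd Suc k then c (Suc k div d) / of_nat (Suc k) powr s else 0)
           sums (L / of_nat d powr s)"
proof -
  define g where "g n = d * n + (d - 1)" for n
  have g: "Suc (g n) = d * Suc n" for n using \<open>d > 0\<close> by (cases d) (simp_all add: g_def)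
  have "strict_mono g"
  proof (rule strict_monoI)
    fix x y :: nat assume "x < y"
    then have "d * x < d * y" using \<open>d > 0\<close> by simp
    then show "g x < g y" unfolding g_def by arith
  qed
  moreover have "k \<in> range g" if dvd: "d dvd Suc k" for k
  proof -
    obtain j where j: "Suc k = d * j" using dvd by (elim dvdE)
    then obtain i where "j = Suc i" by (cases j) auto
    then have "Suc k = Suc (g i)" using j g by simp
    then show ?thesis by auto
  qed
  moreover have "(\<lambda>n. if d dvd Suc (g n) then c (Suc (g n) div d) / of_nat (Suc (g n)) powr s else 0) =
      (\<lambda>n. c (Suc n) / of_nat (Suc n) powr s / of_nat d powr s)"
  proof
    fix n
    have "of_nat (Suc (g n)) powr s = (of_nat d powr s * of_nat (Suc n) powr s :: complex)"
      unfolding g of_nat_mult by (rule powr_times_real) auto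
    then show "(if d dvd Suc (g n) then c (Suc (g n) div d) / of_nat (Suc (g n)) powr s else 0) =
        c (Suc n) / of_nat (Suc n) powr s / of_nat d powr s"
      using \<open>d > 0\<close> by (simp add: g)
  qed
  moreover have "(\<lambda>n. c (Suc n) / of_nat (Suc n) powr s / of_nat d powr s) sums (L / of_nat d powr s)"
    using assms(1) by (rule sums_divide)
  ultimately show ?thesis by (subst sums_mono_reindex[symmetric]) auto
qed

lemma dseries_dconv_finite_support:
  assumes B: "\<And>n. norm (\<psi> n) \<le> B" and a0: "\<And>d. d > N \<Longrightarrow> a d = 0" and s: "Re s > 1"
  shows "dseries (dconv \<psi> a) s = dpoly a N s * dseries \<psi> s"
proof -
  define e where "e d k = (if d dvd Suc k then \<psi> (Suc k div d) / of_nat (Suc k) powr s else 0)" for d k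
  have "(\<lambda>k. \<Sum>d=1..N. a d * e d k) sums (\<Sum>d=1..N. a d * (dseries \<psi> s / of_nat d powr s))"
    unfolding e_def using B s by (intro sums_sum sums_mult sums_dilate_dseries dseries_sums) auto
  moreover have "(\<Sum>d=1..N. a d * e d k) = dconv \<psi> a (Suc k) / of_nat (Suc k) powr s" for k
  proof -
    have "(\<Sum>d=1..N. a d * e d k) =
        (\<Sum>d | d dvd Suc k \<and> d \<le> N. a d * \<psi> (Suc k div d) / of_nat (Suc k) powr s)"
      by (rule sum.mono_neutral_cong_right) (auto simp: e_def Suc_le_eq intro: dvd_pos_nat)
    also have "\<dots> = (\<Sum>d | d dvd Suc k. a d * \<psi> (Suc k div d) / of_nat (Suc k) powr s)"
    proof (rule sum.mono_neutral_left)
      show "\<forall>d\<in>{d. d dvd Suc k} - {d. d dvd Suc k \<and> d \<le> N}.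
          a d * \<psi> (Suc k div d) / of_nat (Suc k) powr s = 0"
        using a0 by (simp add: not_le)
    qed auto
    also have "\<dots> = dconv \<psi> a (Suc k) / of_nat (Suc k) powr s"
      by (simp add: dconv_def sum_divide_distrib mult.commute)
    finally show ?thesis .
  qed
  moreover have "(\<Sum>d=1..N. a d * (dseries \<psi> s / of_nat d powr s)) = dpoly a N s * dseries \<psi> s"
    by (simp add: dpoly_def sum_distrib_right)
  ultimately have "(\<lambda>k. dconv \<psi> a (Suc k) / of_nat (Suc k) powr s) sums (dpoly a N s * dseries \<psi> s)"
    by simp
  then show ?thesis unfolding dseries_def[of "dconv \<psi> a"] by (rule sums_unique[symmetric])
qed

lemma norm_dseries_tail_le:
  fixes b :: "nat \<Rightarrow> complex"
  assumes bounded: "\<And>n. n \<ge> 1 \<Longrightarrow> norm (b n) \<le> B"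
  shows "norm (\<Sum>i. b (Suc (i + n)) / of_nat (Suc (i + n)) ^ (j + 2))
           \<le> B / real (Suc n) ^ j * (\<Sum>i. 1 / real (Suc i) ^ 2)"
proof -
  have "B \<ge> 0" using bounded[of 1] norm_ge_zero[of "b 1"] by linarith
  have "summable (\<lambda>i. inverse (real i ^ 2))" by (rule inverse_power_summable) simp
  then have "summable (\<lambda>i. 1 / real (Suc i) ^ 2)" by (subst (asm) summable_Suc_iff[symmetric]) (simp add: divide_inverse)
  then have majorant: "summable (\<lambda>i. B / real (Suc n) ^ j * (1 / real (Suc i) ^ 2))"
    by (rule summable_mult)
  have bound: "norm (b (Suc (i + n)) / of_nat (Suc (i + n)) ^ (j + 2))
      \<le> B / real (Suc n) ^ j * (1 / real (Suc i) ^ 2)" for i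
  proof -
    have "real (Suc n) ^ j * real (Suc i) ^ 2 \<le> real (Suc (i + n)) ^ j * real (Suc (i + n)) ^ 2"
      by (intro mult_mono power_mono) auto
    then have le: "real (Suc n) ^ j * real (Suc i) ^ 2 \<le> real (Suc (i + n)) ^ (j + 2)"
      by (simp only: power_add)
    have "norm (b (Suc (i + n)) / of_nat (Suc (i + n)) ^ (j + 2)) = norm (b (Suc (i + n))) / real (Suc (i + n)) ^ (j + 2)"
      by (simp only: norm_divide norm_power norm_of_nat)
    also have "\<dots> \<le> B / real (Suc (i + n)) ^ (j + 2)"
      using bounded[of "Suc (i + n)"] by (intro divide_right_mono) auto
    also have "\<dots> \<le> B / (real (Suc n) ^ j * real (Suc i) ^ 2)"
      using le \<open>B \<ge> 0\<close> by (intro divide_left_mono) auto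
    finally show ?thesis by simp
  qed
  have "summable (\<lambda>i. norm (b (Suc (i + n)) / of_nat (Suc (i + n)) ^ (j + 2)))"
    by (rule summable_comparison_test'[OF majorant]) (use bound in auto)
  then have "norm (\<Sum>i. b (Suc (i + n)) / of_nat (Suc (i + n)) ^ (j + 2))
      \<le> (\<Sum>i. B / real (Suc n) ^ j * (1 / real (Suc i) ^ 2))"
    using majorant bound by (intro order_trans[OF summable_norm suminf_le]) auto
  also have "\<dots> = B / real (Suc n) ^ j * (\<Sum>i. 1 / real (Suc i) ^ 2)"
    using \<open>summable (\<lambda>i. 1 / real (Suc i) ^ 2)\<close> by (rule suminf_mult)
  finally show ?thesis .
qed

text \<open>If \<open>b\<close> vanishes below \<open>n\<close>, then \<open>n\<^sup>k D\<^sub>b(k) \<rightarrow> b n\<close> as \<open>k \<rightarrow> \<infinity>\<close>.\<close>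

lemma dseries_eq_zero_imp_zero:
  fixes b :: "nat \<Rightarrow> complex"
  assumes bounded: "\<And>n. n \<ge> 1 \<Longrightarrow> norm (b n) \<le> B"
    and zero: "\<And>k. k \<ge> 2 \<Longrightarrow> dseries b (of_nat k) = 0" and "n \<ge> 1"
  shows "b n = 0"
  using \<open>n \<ge> 1\<close>
proof (induction n rule: less_induct)
  case (less n)
  define W where "W = (\<Sum>i. 1 / real (Suc i) ^ 2)"
  have key: "norm (b n) \<le> B * W * real n ^ 2 * (real n / real (Suc n)) ^ j" for j
  proof -
    define k where "k = j + 2"
    define T where "T i = b (Suc i) / of_nat (Suc i) ^ k" for i
    have "k \<ge> 2" by (simp add: k_def)
    then have "Re (of_nat k) > 1" by simp
    have pw: "of_nat (Suc i) powr of_nat k = (of_nat (Suc i) ^ k :: complex)" for i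
      by (rule powr_complexpow) (simp only: of_nat_eq_0_iff nat.distinct(2) not_False_eq_True)
    have "T sums 0"
      using dseries_sums[of b B "of_nat k", OF bounded \<open>Re (of_nat k) > 1\<close>]
      unfolding zero[OF \<open>k \<ge> 2\<close>] pw T_def .
    then have "(\<lambda>i. T (i + n)) sums - (\<Sum>i<n. T i)" by (simp add: sums_iff_shift)
    moreover obtain n' where n': "n = Suc n'" using less.prems by (cases n) auto
    have "(\<Sum>i<n'. T i) = 0" using less.IH n' by (intro sum.neutral) (simp add: T_def)
    then have "(\<Sum>i<n. T i) = b n / of_nat n ^ k" by (simp add: n' T_def)
    ultimately have "norm (b n) / real n ^ k = norm (\<Sum>i. T (i + n))"
      by (simp add: sums_iff norm_divide norm_power)
    also have "\<dots> \<le> B / real (Suc n) ^ j * W"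
      unfolding T_def k_def W_def by (rule norm_dseries_tail_le[OF bounded])
    finally have "norm (b n) \<le> B / real (Suc n) ^ j * W * real n ^ k"
      using less.prems by (simp add: divide_le_eq)
    also have "\<dots> = B * W * real n ^ 2 * (real n / real (Suc n)) ^ j"
      by (simp add: k_def power_add power_divide power2_eq_square)
    finally show ?thesis .
  qed
  have "(\<lambda>j. B * W * real n ^ 2 * (real n / real (Suc n)) ^ j) \<longlonglongrightarrow> B * W * real n ^ 2 * 0"
    by (intro tendsto_mult_left LIMSEQ_power_zero) auto
  then have "norm (b n) \<le> B * W * real n ^ 2 * 0"
    by (rule LIMSEQ_le_const) (use key in auto)
  then show "b n = 0" by simp
qed

lemma norm_dconv_finite_support_le:
  assumes B: "\<And>n. norm (\<psi> n) \<le> B" and a0: "\<And>d. d > N \<Longrightarrow> a d = 0" and "n \<ge> 1"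
  shows "norm (dconv \<psi> a n) \<le> (\<Sum>d=1..N. B * norm (a d))"
proof -
  have "B \<ge> 0" using B[of 0] norm_ge_zero[of "\<psi> 0"] by linarith
  have "norm (dconv \<psi> a n) \<le> (\<Sum>d | d dvd n. norm (\<psi> (n div d) * a d))"
    unfolding dconv_def by (rule norm_sum)
  also have "\<dots> \<le> (\<Sum>d | d dvd n. B * norm (a d))"
    using B by (intro sum_mono) (simp add: norm_mult mult_right_mono)
  also have "\<dots> = (\<Sum>d | d dvd n \<and> d \<le> N. B * norm (a d))"
  proof (rule sum.mono_neutral_right)
    show "\<forall>d\<in>{d. d dvd n} - {d. d dvd n \<and> d \<le> N}. B * norm (a d) = 0"
      using a0 by (simp add: not_le)
  qed (use \<open>n \<ge> 1\<close> in auto)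
  also have "\<dots> \<le> (\<Sum>d=1..N. B * norm (a d))"
    using \<open>n \<ge> 1\<close> \<open>B \<ge> 0\<close> by (intro sum_mono2) (auto simp: Suc_le_eq intro: dvd_pos_nat)
  finally show ?thesis .
qed

lemma dconv_mobius_vanishes_imp_dseries_factor:
  assumes dc: "dirichlet_char q0 \<psi>" and "m > 0"
    and vanish: "\<forall>n\<ge>1. \<not> n dvd m \<longrightarrow> dconv f (\<lambda>k. mobius_mu k * \<psi> k) n = 0"
  shows "\<exists>a N. \<forall>s. Re s > 1 \<longrightarrow> dseries f s = dpoly a N s * dseries \<psi> s"
proof -
  define H where "H = dconv f (\<lambda>k. mobius_mu k * \<psi> k)"
  obtain B where B: "\<And>n. norm (\<psi> n) \<le> B" using dirichlet_char_bounded[OF dc] by blast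
  have H0: "H d = 0" if "d > m" for d
  proof -
    have "\<not> d dvd m" using that \<open>m > 0\<close> by (auto dest: dvd_imp_le)
    then show ?thesis using vanish that by (simp add: H_def)
  qed
  have "dseries f s = dseries (dconv \<psi> H) s" for s
    unfolding dseries_def H_def using dconv_char_dconv_mobius[OF dc] by simp
  then have "dseries f s = dpoly H m s * dseries \<psi> s" if "Re s > 1" for s
    using dseries_dconv_finite_support[of \<psi> B m H, OF B H0 that] by simp
  then show ?thesis by blast
qed

lemma dseries_factor_imp_dconv_char:
  assumes dc: "dirichlet_char q0 \<psi>" and bounded: "\<And>n. n \<ge> 1 \<Longrightarrow> norm (f n) \<le> Bf"
    and factor: "\<forall>s. Re s > 1 \<longrightarrow> dseries f s = dpoly a N s * dseries \<psi> s" and "n > 0"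
  shows "f n = dconv \<psi> (\<lambda>d. if d \<le> N then a d else 0) n"
proof -
  define a' where "a' = (\<lambda>d. if d \<le> N then a d else 0)"
  obtain B where B: "\<And>n. norm (\<psi> n) \<le> B" using dirichlet_char_bounded[OF dc] by blast
  have a'0: "a' d = 0" if "d > N" for d using that by (simp add: a'_def)
  have dpoly_a': "dpoly a' N s = dpoly a N s" for s by (simp add: dpoly_def a'_def)
  define b where "b n = f n - dconv \<psi> a' n" for n
  have dconv_bounded: "norm (dconv \<psi> a' n) \<le> (\<Sum>d=1..N. B * norm (a' d))" if "n \<ge> 1" for n
    by (rule norm_dconv_finite_support_le[OF B]) (use that in \<open>simp_all add: a'_def\<close>)
  have b_bounded: "norm (b n) \<le> Bf + (\<Sum>d=1..N. B * norm (a' d))" if "n \<ge> 1" for n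
    using bounded[OF that] dconv_bounded[OF that] norm_triangle_ineq4[of "f n" "dconv \<psi> a' n"]
    unfolding b_def by linarith
  have dseries_b: "dseries b (of_nat k) = 0" if "k \<ge> 2" for k
  proof -
    have s: "Re (of_nat k) > 1" using that by simp
    have "dseries b (of_nat k) = dseries f (of_nat k) - dseries (dconv \<psi> a') (of_nat k)"
      unfolding b_def by (rule dseries_diff[OF bounded dconv_bounded s])
    also have "\<dots> = 0" using factor s dseries_dconv_finite_support[of \<psi> B N a', OF B a'0 s] dpoly_a' by simp
    finally show ?thesis .
  qed
  have "b n = 0"
    by (rule dseries_eq_zero_imp_zero[of b, OF b_bounded dseries_b]) (use \<open>n > 0\<close> in simp_all)
  then show ?thesis by (simp add: b_def a'_def)
qed

section \<open>Primitive characters\<close>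

lemma exists_mod_eq_pair:
  fixes a b M N :: nat
  assumes "M > 0" "N > 0" "a mod gcd M N = b mod gcd M N"
  shows "\<exists>x. x mod M = a mod M \<and> x mod N = b mod N"
proof -
  have ordered: "\<exists>x. x mod M = a mod M \<and> x mod N = b mod N"
    if pos: "M > 0" "N > 0" and "b \<le> a" and cong: "a mod gcd M N = b mod gcd M N" for a b M N :: nat
  proof -
    obtain h where h: "a = b + gcd M N * h" using cong \<open>b \<le> a\<close> by (elim mod_eq_nat1E)
    obtain u v where uv: "M * u = N * v + gcd M N" using bezout_nat[of M N] pos(1) by auto
    obtain N' where N': "N = Suc N'" using pos(2) by (cases N) auto
    define x where "x = a + M * (u * h * N')"
    have "M * (u * h * N') = (N * v + gcd M N) * h * N'" by (simp add: uv[symmetric] mult.assoc)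
    then have "x = b + N * (gcd M N * h + v * h * N')"
      unfolding x_def h by (simp add: N' algebra_simps)
    then have "x mod N = b mod N" by simp
    moreover have "x mod M = a mod M" by (simp add: x_def)
    ultimately show ?thesis by blast
  qed
  show ?thesis
  proof (cases "b \<le> a")
    case True
    show ?thesis using ordered[OF assms(1,2) True assms(3)] .
  next
    case False
    then have "\<exists>x. x mod N = b mod N \<and> x mod M = a mod M"
      using ordered[of N M a b] assms by (simp add: gcd.commute)
    then show ?thesis by blast
  qed
qed

lemma exists_coprime_mod_eq:
  fixes u M L :: nat
  assumes "M > 0" "L > 0" "coprime u M"
  shows "\<exists>t. t > 0 \<and> t mod M = u mod M \<and> coprime t L"
proof -
  define X where "X = \<Prod>{p \<in> prime_factors L. \<not> p dvd u}"
  define t where "t = u + M * X"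
  have "X > 0" unfolding X_def by (intro prod_pos) (auto intro: prime_gt_0_nat)
  have no_common_prime: "\<not> p dvd t" if "prime p" "p dvd L" for p
  proof (cases "p dvd u")
    case True
    then have "\<not> p dvd M" using \<open>coprime u M\<close> \<open>prime p\<close> by (meson coprime_common_divisor not_prime_unit)
    moreover have "\<not> p dvd X"
    proof
      assume "p dvd X"
      then obtain r where "prime r" "\<not> r dvd u" "p dvd r"
        using \<open>prime p\<close> by (auto simp: X_def prime_dvd_prod_iff)
      then show False using True \<open>prime p\<close> by (metis primes_dvd_imp_eq)
    qed
    ultimately have "\<not> p dvd M * X" using \<open>prime p\<close> by (simp add: prime_dvd_mult_iff)
    then show ?thesis using True by (simp add: t_def dvd_add_right_iff)
  next
    case False
    then have "p dvd X" using that \<open>L > 0\<close> by (auto simp: X_def in_prime_factors_iff intro!: dvd_prodI)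
    then show ?thesis using False by (simp add: t_def dvd_add_left_iff)
  qed
  have "coprime t L"
  proof (rule ccontr)
    assume "\<not> coprime t L"
    then obtain c where "c dvd t" "c dvd L" "c \<noteq> 1" by (elim not_coprimeE) auto
    then obtain p where "prime p" "p dvd c" using prime_factor_nat by blast
    then show False using no_common_prime \<open>c dvd t\<close> \<open>c dvd L\<close> by (meson dvd_trans)
  qed
  moreover have "t > 0" "t mod M = u mod M" using \<open>M > 0\<close> \<open>X > 0\<close> by (simp_all add: t_def)
  ultimately show ?thesis by blast
qed

lemma dirichlet_char_eq_if_mod_eq_divisor:
  assumes dc: "dirichlet_char q0 \<psi>" and "e dvd q0"
    and trivial: "\<And>w. coprime w q0 \<Longrightarrow> w mod e = 1 mod e \<Longrightarrow> \<psi> w = 1"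
    and "coprime t1 q0" "coprime t2 q0" "t1 mod e = t2 mod e"
  shows "\<psi> t1 = \<psi> t2"
proof -
  have "q0 > 0" using dc by (rule dirichlet_charD)
  obtain x where x: "(t2 * x) mod q0 = 1 mod q0"
    using cong_solve_coprime_nat[OF \<open>coprime t2 q0\<close>] by (metis cong_def One_nat_def)
  then have "coprime (t2 * x) q0" using \<open>q0 > 0\<close> by (metis coprime_1_left coprime_mod_left_iff neq0_conv)
  then have "coprime x q0" by simp
  have "(t1 * x) mod e = (t2 * x) mod e" using \<open>t1 mod e = t2 mod e\<close> by (intro mod_mult_cong) auto
  also have "\<dots> = 1 mod e" using x \<open>e dvd q0\<close> by (metis mod_mod_cancel)
  finally have "\<psi> t1 * \<psi> x = 1"
    using trivial[of "t1 * x"] \<open>coprime t1 q0\<close> \<open>coprime x q0\<close> dirichlet_charD(2)[OF dc] by simp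
  moreover have "\<psi> t2 * \<psi> x = 1"
    using dirichlet_char_cong[OF dc x] dirichlet_char_one[OF dc] dirichlet_charD(2)[OF dc] by simp
  moreover have "\<psi> x \<noteq> 0" using dirichlet_charD(3)[OF dc] \<open>coprime x q0\<close> by blast
  ultimately show ?thesis by (metis mult_cancel_right)
qed

lemma dirichlet_char_descend:
  assumes dc: "dirichlet_char q0 \<psi>" and "e dvd q0"
    and char_eq: "\<And>t1 t2. coprime t1 q0 \<Longrightarrow> coprime t2 q0 \<Longrightarrow> t1 mod e = t2 mod e \<Longrightarrow> \<psi> t1 = \<psi> t2"
    and lift: "\<And>n. coprime n e \<Longrightarrow> lift n mod e = n mod e \<and> coprime (lift n) q0"
  shows "dirichlet_char e (\<lambda>n. if coprime n e then \<psi> (lift n) else 0)"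
  unfolding dirichlet_char_def
proof (intro conjI allI)
  have "q0 > 0" using dc by (rule dirichlet_charD)
  then show "e > 0" using \<open>e dvd q0\<close> by (auto intro: dvd_pos_nat)
  fix n :: nat
  have "coprime (n + e) e \<longleftrightarrow> coprime n e"
    using \<open>e > 0\<close> by (metis coprime_mod_left_iff mod_add_self2 neq0_conv)
  moreover have "\<psi> (lift (n + e)) = \<psi> (lift n)" if "coprime n e"
    using lift[of "n + e"] lift[of n] that \<open>coprime (n + e) e \<longleftrightarrow> coprime n e\<close> by (intro char_eq) auto
  ultimately show "(if coprime (n + e) e then \<psi> (lift (n + e)) else 0) = (if coprime n e then \<psi> (lift n) else 0)"
    by simp
  show "(if coprime n e then \<psi> (lift n) else 0) \<noteq> 0 \<longleftrightarrow> coprime n e"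
    using lift dirichlet_charD(3)[OF dc] by auto
next
  fix a b :: nat
  show "(if coprime (a * b) e then \<psi> (lift (a * b)) else 0) =
      (if coprime a e then \<psi> (lift a) else 0) * (if coprime b e then \<psi> (lift b) else 0)"
  proof (cases "coprime a e \<and> coprime b e")
    case True
    then have "lift (a * b) mod e = (lift a * lift b) mod e"
      using lift by (auto intro: mod_mult_cong)
    then have "\<psi> (lift (a * b)) = \<psi> (lift a * lift b)"
      using lift True by (intro char_eq) auto
    then show ?thesis using True by (simp add: dirichlet_charD(2)[OF dc])
  qed auto
qed

lemma exists_char_inducing:
  assumes dc: "dirichlet_char q0 \<psi>" and "e dvd q0"
    and trivial: "\<And>w. coprime w q0 \<Longrightarrow> w mod e = 1 mod e \<Longrightarrow> \<psi> w = 1"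
  shows "\<exists>\<psi>'. dirichlet_char e \<psi>' \<and> induces e \<psi>' q0 \<psi>"
proof -
  have "q0 > 0" using dc by (rule dirichlet_charD)
  then have "e > 0" using \<open>e dvd q0\<close> by (auto intro: dvd_pos_nat)
  note char_eq = dirichlet_char_eq_if_mod_eq_divisor[OF dc \<open>e dvd q0\<close> trivial]
  have "\<forall>n. \<exists>t. coprime n e \<longrightarrow> t mod e = n mod e \<and> coprime t q0"
    using exists_coprime_mod_eq[OF \<open>e > 0\<close> \<open>q0 > 0\<close>] by blast
  then obtain lift where lift: "\<And>n. coprime n e \<Longrightarrow> lift n mod e = n mod e \<and> coprime (lift n) q0"
    by metis
  define \<psi>' where "\<psi>' = (\<lambda>n. if coprime n e then \<psi> (lift n) else 0)"
  have "dirichlet_char e \<psi>'"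
    unfolding \<psi>'_def using dc \<open>e dvd q0\<close> char_eq lift by (rule dirichlet_char_descend)
  moreover have "\<psi> n = \<psi>' n * principal_char q0 n" for n
  proof (cases "coprime n q0")
    case True
    then have "coprime n e" by (rule coprime_divisors[OF dvd_refl \<open>e dvd q0\<close>])
    then have "\<psi> (lift n) = \<psi> n" using lift True by (intro char_eq) auto
    then show ?thesis using True \<open>coprime n e\<close> by (simp add: \<psi>'_def principal_char_def)
  next
    case False
    then have "\<psi> n = 0" using dirichlet_charD(3)[OF dc, of n] by blast
    then show ?thesis using False by (simp add: principal_char_def)
  qed
  ultimately show ?thesis using \<open>e dvd q0\<close> by (auto simp: induces_def)
qed

text \<open>By the Chinese remainder theorem, \<open>\<psi>\<close> is then trivial on \<open>1 mod gcd q0 D\<close>, i.e. induced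
  from the modulus \<open>gcd q0 D\<close>.\<close>

lemma primitive_char_dvd_if_trivial:
  assumes prim: "primitive_char q0 \<psi>" and "D > 0" "L > 0"
    and trivial: "\<And>t. t > 0 \<Longrightarrow> coprime t L \<Longrightarrow> t mod D = 1 mod D \<Longrightarrow> \<psi> t = 1"
  shows "q0 dvd D"
proof -
  have dc: "dirichlet_char q0 \<psi>" using prim by (simp add: primitive_char_def)
  then have "q0 > 0" by (rule dirichlet_charD)
  define e where "e = gcd q0 D"
  have "\<psi> w = 1" if "coprime w q0" and w1: "w mod e = 1 mod e" for w
  proof -
    obtain t0 where t0: "t0 mod q0 = w mod q0" "t0 mod D = 1 mod D"
      using exists_mod_eq_pair[OF \<open>q0 > 0\<close> \<open>D > 0\<close>, of w 1] w1 by (auto simp: e_def)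
    have "coprime t0 q0" using t0(1) \<open>coprime w q0\<close> \<open>q0 > 0\<close> by (metis coprime_mod_left_iff neq0_conv)
    moreover have "coprime t0 D" using t0(2) \<open>D > 0\<close> by (metis coprime_1_left coprime_mod_left_iff neq0_conv)
    ultimately have "coprime t0 (q0 * D)" by simp
    then obtain t where t: "t > 0" "t mod (q0 * D) = t0 mod (q0 * D)" "coprime t L"
      using exists_coprime_mod_eq[of "q0 * D" L t0] \<open>q0 > 0\<close> \<open>D > 0\<close> \<open>L > 0\<close> by auto
    have "t mod q0 = w mod q0" "t mod D = 1 mod D"
      using t(2) t0 by (metis mod_mod_cancel dvd_triv_left dvd_triv_right)+
    then show ?thesis using trivial[OF t(1) t(3)] dirichlet_char_cong[OF dc] by metis
  qed
  then obtain \<psi>' where "dirichlet_char e \<psi>'" "induces e \<psi>' q0 \<psi>"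
    using exists_char_inducing[OF dc, of e] by (auto simp: e_def)
  then have "e = q0" using prim by (metis primitive_char_def e_def gcd_dvd1)
  then show ?thesis by (metis e_def gcd_dvd2)
qed

section \<open>Twisted multiplicativity\<close>

lemma dconv_char_twisted_mult:
  assumes dc: "dirichlet_char q0 \<psi>" and f: "\<And>n. n > 0 \<Longrightarrow> f n = dconv \<psi> a n"
    and a0: "\<And>d. d > N \<Longrightarrow> a d = 0" and "k > 0" "t > 0" "coprime t (fact N)"
  shows "f (k * t) = \<psi> t * f k"
proof -
  have a_vanishes: "a d = 0" if "d dvd k * t" "\<not> d dvd k" for d
  proof (rule ccontr)
    assume "a d \<noteq> 0"
    then have "d \<le> N" using a0 by (meson not_le)
    moreover have "d > 0" by (rule dvd_pos_nat[OF _ that(1)]) (simp add: \<open>k > 0\<close> \<open>t > 0\<close>)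
    ultimately have "d dvd fact N" by (simp add: dvd_fact)
    then have "coprime t d" using \<open>coprime t (fact N)\<close> by (rule coprime_divisors[OF dvd_refl])
    then have "d dvd k" using that(1) by (simp add: coprime_commute coprime_dvd_mult_left_iff)
    then show False using that(2) by contradiction
  qed
  have "f (k * t) = (\<Sum>d | d dvd k * t. \<psi> (k * t div d) * a d)"
    using f \<open>k > 0\<close> \<open>t > 0\<close> by (simp add: dconv_def)
  also have "\<dots> = (\<Sum>d | d dvd k. \<psi> (k * t div d) * a d)"
    by (rule sum.mono_neutral_right) (use \<open>k > 0\<close> \<open>t > 0\<close> a_vanishes in auto)
  also have "\<dots> = (\<Sum>d | d dvd k. \<psi> t * (\<psi> (k div d) * a d))"
  proof (rule sum.cong)
    fix d assume "d \<in> {d. d dvd k}"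
    then have "k * t div d = (k div d) * t" by (simp add: dvd_div_mult)
    then show "\<psi> (k * t div d) * a d = \<psi> t * (\<psi> (k div d) * a d)"
      by (simp add: dirichlet_charD(2)[OF dc])
  qed simp
  also have "\<dots> = \<psi> t * f k" using f \<open>k > 0\<close> by (simp add: dconv_def sum_distrib_left)
  finally show ?thesis .
qed

lemma twisted_mult_nonzero_imp_dvd:
  assumes prim: "primitive_char q0 \<psi>" and "q > 0" and per: "periodic_arith q f"
    and "L > 0" and twisted: "\<And>k t. k > 0 \<Longrightarrow> t > 0 \<Longrightarrow> coprime t L \<Longrightarrow> f (k * t) = \<psi> t * f k"
    and "k > 0" "f k \<noteq> 0"
  shows "q0 dvd q div gcd k q"
proof (rule primitive_char_dvd_if_trivial[OF prim _ \<open>L > 0\<close>])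
  define G where "G = gcd k q"
  obtain k' where k: "k = G * k'" unfolding G_def by (meson dvdE gcd_dvd1)
  have q: "q = G * (q div G)" by (simp add: G_def)
  show "q div gcd k q > 0" using \<open>q > 0\<close> by (simp add: div_greater_zero_iff)
  fix t assume t: "t > 0" "coprime t L" "t mod (q div gcd k q) = 1 mod (q div gcd k q)"
  have "(k' * t) mod (q div G) = k' mod (q div G)"
    using t(3) unfolding G_def[symmetric] by (metis mod_mult_right_eq mult.right_neutral)
  then have "(k * t) mod q = k mod q" by (metis k q mult_mod_right mult.assoc)
  then have "f (k * t) = f k" using per t(1) \<open>k > 0\<close> by (intro periodic_arith_cong) (auto simp: Suc_le_eq)
  then show "\<psi> t = 1" using twisted[OF \<open>k > 0\<close> t(1,2)] \<open>f k \<noteq> 0\<close> by simp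
qed

lemma twisted_mult_nonzero_imp_coprime:
  assumes prim: "primitive_char q0 \<psi>" and "q0 dvd q" "q > 0" and per: "periodic_arith q f"
    and "L > 0" and twisted: "\<And>k t. k > 0 \<Longrightarrow> t > 0 \<Longrightarrow> coprime t L \<Longrightarrow> f (k * t) = \<psi> t * f k"
    and "n > 0" "f n \<noteq> 0"
  shows "coprime (n div gcd n (q div q0)) q0"
proof (rule ccontr)
  define m where "m = q div q0"
  define g where "g = gcd n m"
  define G where "G = gcd n q"
  assume "\<not> coprime (n div gcd n (q div q0)) q0"
  then obtain c where c: "c dvd n div g" "c dvd q0" "c \<noteq> 1"
    by (elim not_coprimeE) (auto simp: g_def m_def)
  have q: "q = q0 * m" using \<open>q0 dvd q\<close> by (simp add: m_def)
  have "q0 dvd q div G"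
    using twisted_mult_nonzero_imp_dvd[OF prim \<open>q > 0\<close> per \<open>L > 0\<close> twisted \<open>n > 0\<close> \<open>f n \<noteq> 0\<close>]
    by (simp add: G_def)
  then have "q0 * G dvd (q div G) * G" by (rule mult_dvd_mono) simp
  then have "q0 * G dvd q0 * m" by (simp add: G_def q[symmetric])
  then have "G dvd m" using \<open>q0 dvd q\<close> \<open>q > 0\<close> by (auto simp: q)
  then have "G dvd g" by (simp add: G_def g_def)
  have "g * c dvd g * (n div g)" using c(1) by (rule mult_dvd_mono[OF dvd_refl])
  then have "g * c dvd n" by (simp add: g_def)
  moreover have "g * c dvd m * q0" using c(2) by (intro mult_dvd_mono) (simp_all add: g_def)
  then have "g * c dvd q" by (simp add: q mult.commute)
  ultimately have "g * c dvd g * 1" using \<open>G dvd g\<close> by (metis G_def gcd_greatest dvd_trans mult_1_right)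
  moreover have "g > 0" using \<open>n > 0\<close> by (simp add: g_def)
  ultimately show False using c(3) by simp
qed

lemma periodic_twisted_mult_imp_gcd_form:
  assumes prim: "primitive_char q0 \<psi>" and "q0 dvd q" "q > 0" and per: "periodic_arith q f"
    and "L > 0" and twisted: "\<And>k t. k > 0 \<Longrightarrow> t > 0 \<Longrightarrow> coprime t L \<Longrightarrow> f (k * t) = \<psi> t * f k"
  shows "\<forall>n\<ge>1. f n = f (gcd n (q div q0)) * \<psi> (n div gcd n (q div q0))"
proof (intro allI impI)
  fix n :: nat assume "n \<ge> 1"
  have dc: "dirichlet_char q0 \<psi>" using prim by (simp add: primitive_char_def)
  define m where "m = q div q0"
  define g where "g = gcd n m"
  define u where "u = n div g"
  have q: "q = q0 * m" using \<open>q0 dvd q\<close> by (simp add: m_def)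
  then have "m > 0" using \<open>q > 0\<close> by simp
  then have "g > 0" "g dvd m" "g dvd n" by (simp_all add: g_def)
  then have n: "n = g * u" by (simp add: u_def)
  have "f n = f g * \<psi> u"
  proof (cases "coprime u q0")
    case True
    define M where "M = q0 * (m div g)"
    have qM: "q = g * M" using q \<open>g dvd m\<close> by (simp add: M_def)
    have "coprime u (m div g)" using \<open>m > 0\<close> by (simp add: u_def g_def div_gcd_coprime)
    then have "coprime u M" using True by (simp add: M_def)
    moreover have "M > 0" using qM \<open>q > 0\<close> by simp
    ultimately obtain t where t: "t > 0" "t mod M = u mod M" "coprime t L"
      using exists_coprime_mod_eq \<open>L > 0\<close> by blast
    have "(g * t) mod q = n mod q" unfolding qM n by (metis mult_mod_right t(2))
    then have "f (g * t) = f n" using per t(1) \<open>g > 0\<close> \<open>n \<ge> 1\<close> by (intro periodic_arith_cong) auto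
    moreover have "\<psi> t = \<psi> u"
      using t(2) dirichlet_char_cong[OF dc] by (metis M_def mod_mod_cancel dvd_triv_left)
    ultimately show ?thesis using twisted[OF \<open>g > 0\<close> t(1,3)] by (simp add: mult.commute)
  next
    case False
    then have "f n = 0"
      using twisted_mult_nonzero_imp_coprime[OF prim \<open>q0 dvd q\<close> \<open>q > 0\<close> per \<open>L > 0\<close> twisted, of n]
        \<open>n \<ge> 1\<close> by (auto simp: u_def g_def m_def)
    moreover have "\<psi> u = 0" using False dirichlet_charD(3)[OF dc] by blast
    ultimately show ?thesis by simp
  qed
  then show "f n = f (gcd n (q div q0)) * \<psi> (n div gcd n (q div q0))" by (simp add: g_def u_def m_def)
qed

lemma dseries_factor_imp_gcd_form:
  assumes prim: "primitive_char q0 \<psi>" and "q0 dvd q" "q > 0" and per: "periodic_arith q f"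
    and factor: "\<forall>s. Re s > 1 \<longrightarrow> dseries f s = dpoly a N s * dseries \<psi> s"
  shows "\<forall>n\<ge>1. f n = f (gcd n (q div q0)) * \<psi> (n div gcd n (q div q0))"
proof -
  have dc: "dirichlet_char q0 \<psi>" using prim by (simp add: primitive_char_def)
  obtain Bf where "\<And>n. n \<ge> 1 \<Longrightarrow> norm (f n) \<le> Bf" using periodic_arith_bounded[OF per \<open>q > 0\<close>] by blast
  then have "f n = dconv \<psi> (\<lambda>d. if d \<le> N then a d else 0) n" if "n > 0" for n
    using dseries_factor_imp_dconv_char[OF dc _ factor that] by blast
  then have "f (k * t) = \<psi> t * f k" if "k > 0" "t > 0" "coprime t (fact N)" for k t
    by (rule dconv_char_twisted_mult[OF dc _ _ that]) simp_all
  then show ?thesis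
    by (intro periodic_twisted_mult_imp_gcd_form[OF prim \<open>q0 dvd q\<close> \<open>q > 0\<close> per, of "fact N"]) simp_all
qed

theorem lemma2p2:
  fixes q q0 :: nat and f \<psi> :: "nat \<Rightarrow> complex"
  assumes "q \<ge> 1"
    and "periodic_arith q f"
    and "q0 dvd q" and "primitive_char q0 \<psi>"
  shows "(in_E q q0 \<psi> f
            \<longleftrightarrow> (\<forall>n\<ge>1. f n = f (gcd n (q div q0)) * \<psi> (n div gcd n (q div q0))))
       \<and> (in_E q q0 \<psi> f
            \<longleftrightarrow> (\<forall>n\<ge>1. \<not> n dvd (q div q0) \<longrightarrow> dconv f (\<lambda>k. mobius_mu k * \<psi> k) n = 0))
       \<and> (in_E q q0 \<psi> f
            \<longleftrightarrow> (\<exists>a N. \<forall>s. Re s > 1 \<longrightarrow> dseries f s = dpoly a N s * dseries \<psi> s))"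
proof -
  have dc: "dirichlet_char q0 \<psi>" using assms(4) by (simp add: primitive_char_def)
  have "q > 0" "q div q0 > 0" using assms(1,3) by (auto elim!: dvdE)
  note in_E_iff_gcd_form[OF dc assms(3) \<open>q > 0\<close>, of f]
    gcd_form_iff_dconv_mobius_vanishes[OF dc \<open>q div q0 > 0\<close>, of f]
    dconv_mobius_vanishes_imp_dseries_factor[OF dc \<open>q div q0 > 0\<close>, of f]
    dseries_factor_imp_gcd_form[OF assms(4,3) \<open>q > 0\<close> assms(2)]
  then show ?thesis by blast
qed

end
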